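(* Let $(\mathcal T,\{x_I\},\{r_I\})$ be a triple as below with $\mathcal T\subseteq\Sigma_N$ non-empty and closed and $s>0$. (a) If the triple is an $s$-tree (i.e. satisfies (T1)–(T5)), then it satisfies (T'3) with $E=1$. (b) Conversely, if the triple satisfies (T1), (T2), (T'3) (with some constant $E$), (T4), (T5), then there are numbers $\tilde r_I$, $I\in\mathcal T^*$, with $E^{-1/s}r_I\le\tilde r_I\le E^{1/s}r_I$ for all $I\in\mathcal T^*$, such that $(\mathcal T,\{x_I\},\{\tilde r_I\})$ satisfies (T1)–(T5) (with suitably modified constants), i.e. is an $s$-tree.
   Context: Words: $A_N=\{0,\dots,N-1\}$, $\Sigma_N=A_N^{\mathbb N}$ with product topology; for $\mathcal T\subseteq\Sigma_N$, $\mathcal T^*$ is the set of finite prefixes $\omega|_k$ ($k\ge0$) of elements of $\mathcal T$, $\mathcal T_k$ those of length $k$; $\prec$ is the prefix relation; $IJ$ concatenation; finite words $I,J$, $|I|\le|J|$, are incomparable if $I_k\ne J_k$ for some $k\le |I|$. Conditions for $x_I\in X$ ($X$ metric space), $0<r_I<\infty$, with constants $\rho,C,D\in(0,\infty)$: (T1) $d(x_I,x_J)\ge C(r_I+r_J)$ for incomparable $I,J\in\mathcal T^*$; (T2) $\operatorname{diam}\{x_{IJ}:IJ\in\mathcal T^*\}\le Dr_I$; (T3) $\sum_{|J|=n,\,IJ\in\mathcal T^*}r_{IJ}^s=r_I^s$ for all $I\in\mathcal T^*$, $n\ge0$; (T4) $r_I\to0$ as $|I|\to\infty$; (T5) $r_{Ij}\ge\rho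 r_I$ whenever $j\in A_N$, $Ij\in\mathcal T^*$. For $I\in\mathcal T^*$ and $n\ge0$ let $\mathcal T^n_I$ be the collection of all sets $\mathcal I\subseteq\bigcup_{k\ge n}\mathcal T_k$ such that every $\omega\in\mathcal T$ has exactly one $J\in\mathcal I$ with $J\prec\omega$, and some $J\in\mathcal I$ satisfies $I\prec J$. (T'3): there is $0<E<\infty$ such that for all $I\in\mathcal T^*$, $n\ge0$ and $\mathcal I\in\mathcal T^n_I$, $\frac1E r_I^s\le\sum_{J:\,IJ\in\mathcal I}r_{IJ}^s\le Er_I^s$. *)

theory Defs
  imports "HOL-Analysis.Analysis"
begin

text \<open>Infinite words over A_N = {0..<N}: functions nat => nat with values < N.
  The type nat => nat carries the product topology (Function_Topology), nat is discrete.\<close>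
definition SigmaN :: "nat \<Rightarrow> (nat \<Rightarrow> nat) set" where
  "SigmaN N = {\<omega>. \<forall>n. \<omega> n < N}"

definition restr :: "(nat \<Rightarrow> nat) \<Rightarrow> nat \<Rightarrow> nat list" where
  "restr \<omega> k = map \<omega> [0..<k]"

definition Tstar :: "(nat \<Rightarrow> nat) set \<Rightarrow> nat list set" where
  "Tstar T = {restr \<omega> k | \<omega> k. \<omega> \<in> T}"

definition Tlev :: "(nat \<Rightarrow> nat) set \<Rightarrow> nat \<Rightarrow> nat list set" where
  "Tlev T k = {I \<in> Tstar T. length I = k}"

definition pref_inf :: "nat list \<Rightarrow> (nat \<Rightarrow> nat) \<Rightarrow> bool" where
  "pref_inf I \<omega> \<longleftrightarrow> I = restr \<omega> (length I)"

definition pref :: "nat list \<Rightarrow> nat list \<Rightarrow> bool" where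
  "pref I J \<longleftrightarrow> (\<exists>K. J = I @ K)"

definition incomparable :: "nat list \<Rightarrow> nat list \<Rightarrow> bool" where
  "incomparable I J \<longleftrightarrow> (\<exists>k < min (length I) (length J). I ! k \<noteq> J ! k)"

definition T1 :: "(nat \<Rightarrow> nat) set \<Rightarrow> (nat list \<Rightarrow> 'a::metric_space) \<Rightarrow> (nat list \<Rightarrow> real) \<Rightarrow> real \<Rightarrow> bool" where
  "T1 T x r C \<longleftrightarrow> (\<forall>I\<in>Tstar T. \<forall>J\<in>Tstar T. incomparable I J \<longrightarrow> dist (x I) (x J) \<ge> C * (r I + r J))"

text \<open>diam {x_{IJ} : IJ in T^*} <= D r_I, written out via pairwise distances.\<close>
definition T2 :: "(nat \<Rightarrow> nat) set \<Rightarrow> (nat list \<Rightarrow> 'a::metric_space) \<Rightarrow> (nat list \<Rightarrow> real) \<Rightarrow> real \<Rightarrow> bool" where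
  "T2 T x r D \<longleftrightarrow> (\<forall>I\<in>Tstar T. \<forall>J K. I @ J \<in> Tstar T \<longrightarrow> I @ K \<in> Tstar T \<longrightarrow>
      dist (x (I @ J)) (x (I @ K)) \<le> D * r I)"

definition T3 :: "(nat \<Rightarrow> nat) set \<Rightarrow> (nat list \<Rightarrow> real) \<Rightarrow> real \<Rightarrow> bool" where
  "T3 T r s \<longleftrightarrow> (\<forall>I\<in>Tstar T. \<forall>n.
      (\<Sum>J\<in>{J. length J = n \<and> I @ J \<in> Tstar T}. r (I @ J) powr s) = r I powr s)"

definition T4 :: "(nat \<Rightarrow> nat) set \<Rightarrow> (nat list \<Rightarrow> real) \<Rightarrow> bool" where
  "T4 T r \<longleftrightarrow> (\<forall>\<epsilon>>0. \<exists>k. \<forall>I\<in>Tstar T. length I \<ge> k \<longrightarrow> r I < \<epsilon>)"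

definition T5 :: "nat \<Rightarrow> (nat \<Rightarrow> nat) set \<Rightarrow> (nat list \<Rightarrow> real) \<Rightarrow> real \<Rightarrow> bool" where
  "T5 N T r \<rho> \<longleftrightarrow> (\<forall>I j. j < N \<longrightarrow> I @ [j] \<in> Tstar T \<longrightarrow> r (I @ [j]) \<ge> \<rho> * r I)"

definition cuts :: "(nat \<Rightarrow> nat) set \<Rightarrow> nat list \<Rightarrow> nat \<Rightarrow> nat list set set" where
  "cuts T I n = {\<I>. \<I> \<subseteq> (\<Union>k\<in>{n..}. Tlev T k)
      \<and> (\<forall>\<omega>\<in>T. \<exists>!J. J \<in> \<I> \<and> pref_inf J \<omega>)
      \<and> (\<exists>J\<in>\<I>. pref I J)}"

definition T3' :: "(nat \<Rightarrow> nat) set \<Rightarrow> (nat list \<Rightarrow> real) \<Rightarrow> real \<Rightarrow> real \<Rightarrow> bool" where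
  "T3' T r s E \<longleftrightarrow> (\<forall>I\<in>Tstar T. \<forall>n. \<forall>\<I>\<in>cuts T I n.
      (1 / E) * r I powr s \<le> (\<Sum>J\<in>{J. I @ J \<in> \<I>}. r (I @ J) powr s)
      \<and> (\<Sum>J\<in>{J. I @ J \<in> \<I>}. r (I @ J) powr s) \<le> E * r I powr s)"

definition s_tree :: "nat \<Rightarrow> (nat \<Rightarrow> nat) set \<Rightarrow> (nat list \<Rightarrow> 'a::metric_space) \<Rightarrow> (nat list \<Rightarrow> real) \<Rightarrow> real \<Rightarrow> bool" where
  "s_tree N T x r s \<longleftrightarrow> (\<forall>I\<in>Tstar T. 0 < r I) \<and>
     (\<exists>\<rho> C D. \<rho> > 0 \<and> C > 0 \<and> D > 0 \<and>
        T1 T x r C \<and> T2 T x r D \<and> T3 T r s \<and> T4 T r \<and> T5 N T r \<rho>)"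

end

(*
  (a) Cuts of the compact set T are finite, so every element of a cut below I can be
  refined to a common depth M; two applications of (T3) then turn the cut sum into the
  level-M sum below I and that into r_I^s.

  (b) By (T'3) applied to the levels, the level sums
  \<nu>_m(I) = \<Sum>{r_(IJ)^s : |IJ| = m} lie in [r_I^s / E, E r_I^s] for all m. A pointwise
  convergent subsequence (Tychonoff) has a limit \<nu> that keeps these bounds and is exactly
  additive, \<nu>(I) = \<Sum>{\<nu>(IJ) : |J| = n}, because \<nu>_m is additive as soon as m \<ge> |I| + n.
  Thus r~_I = \<nu>(I)^(1/s) satisfies (T3); it is comparable to r_I within the factor E^(1/s),
  which preserves (T1), (T2), (T4), (T5) with modified constants.
*)
theory Submission
  imports Defs
begin

lemma length_restr [simp]: "length (restr \<omega> k) = k"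
  by (simp add: restr_def)

lemma take_restr: "n \<le> k \<Longrightarrow> take n (restr \<omega> k) = restr \<omega> n"
  by (simp add: restr_def take_map)

lemma restr_in_Tstar: "\<omega> \<in> T \<Longrightarrow> restr \<omega> k \<in> Tstar T"
  by (auto simp: Tstar_def)

lemma Tstar_imp_pref_inf: "I \<in> Tstar T \<Longrightarrow> \<exists>\<omega>\<in>T. pref_inf I \<omega>"
  by (auto simp: Tstar_def pref_inf_def)

lemma pref_inf_appendD: "pref_inf (I @ K) \<omega> \<Longrightarrow> pref_inf I \<omega>"
  unfolding pref_inf_def by (metis append_eq_conv_conj le_add1 length_append take_restr)

lemma pref_inf_prefix:
  "pref_inf I \<omega> \<Longrightarrow> pref_inf J \<omega> \<Longrightarrow> length I \<le> length J \<Longrightarrow> \<exists>K. J = I @ K"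
  unfolding pref_inf_def by (metis append_take_drop_id take_restr)

lemma Tstar_appendD: "I @ J \<in> Tstar T \<Longrightarrow> I \<in> Tstar T"
  using Tstar_imp_pref_inf[of "I @ J" T] pref_inf_appendD restr_in_Tstar
  unfolding pref_inf_def by metis

lemma set_Tstar_subset: "T \<subseteq> SigmaN N \<Longrightarrow> I \<in> Tstar T \<Longrightarrow> set I \<subseteq> {..<N}"
  by (fastforce simp: Tstar_def SigmaN_def restr_def)

definition extensions :: "(nat \<Rightarrow> nat) set \<Rightarrow> nat list \<Rightarrow> nat \<Rightarrow> nat list set" where
  "extensions T I n = {J. length J = n \<and> I @ J \<in> Tstar T}"

lemma finite_extensions: "T \<subseteq> SigmaN N \<Longrightarrow> finite (extensions T I n)"
proof -
  assume T: "T \<subseteq> SigmaN N"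
  have "extensions T I n \<subseteq> {J. set J \<subseteq> {..<N} \<and> length J = n}"
    using set_Tstar_subset[OF T] by (fastforce simp: extensions_def)
  then show ?thesis
    by (rule finite_subset) (simp add: finite_lists_length_eq)
qed

lemma extensions_not_Tstar: "I \<notin> Tstar T \<Longrightarrow> extensions T I n = {}"
  by (auto simp: extensions_def dest: Tstar_appendD)

section \<open>Cuts\<close>

lemma cut_subset_Tstar: "\<I> \<in> cuts T I n \<Longrightarrow> J \<in> \<I> \<Longrightarrow> J \<in> Tstar T"
  unfolding cuts_def Tlev_def by blast

lemma cut_unique:
  "\<I> \<in> cuts T I n \<Longrightarrow> \<omega> \<in> T \<Longrightarrow> J \<in> \<I> \<Longrightarrow> J' \<in> \<I> \<Longrightarrow> pref_inf J \<omega> \<Longrightarrow> pref_inf J' \<omega>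
    \<Longrightarrow> J = J'"
  unfolding cuts_def by blast

lemma cut_antichain:
  assumes "\<I> \<in> cuts T I n" "J \<in> \<I>" "J @ X \<in> \<I>"
  shows "X = []"
proof -
  obtain \<omega> where \<omega>: "\<omega> \<in> T" "pref_inf (J @ X) \<omega>"
    using Tstar_imp_pref_inf[OF cut_subset_Tstar[OF assms(1,3)]] by blast
  have "J = J @ X"
    using cut_unique[OF assms(1) \<omega>(1) assms(2,3) pref_inf_appendD[OF \<omega>(2)] \<omega>(2)] .
  then show ?thesis by simp
qed

lemma cut_element_below:
  assumes cut: "\<I> \<in> cuts T I n" and \<omega>: "\<omega> \<in> T" "pref_inf I \<omega>"
  obtains K where "I @ K \<in> \<I>" "pref_inf (I @ K) \<omega>"
proof -
  obtain J where J: "J \<in> \<I>" "pref_inf J \<omega>"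
    using cut \<omega>(1) unfolding cuts_def by blast
  obtain K0 where K0: "I @ K0 \<in> \<I>"
    using cut unfolding cuts_def pref_def by blast
  have "length I \<le> length J"
  proof (rule ccontr)
    assume short: "\<not> length I \<le> length J"
    then obtain Y where Y: "I = J @ Y"
      using pref_inf_prefix[OF J(2) \<omega>(2)] by fastforce
    then have "J @ (Y @ K0) \<in> \<I>" using K0 by simp
    then have "Y @ K0 = []" by (rule cut_antichain[OF cut J(1)])
    then show False using Y short by simp
  qed
  then obtain K where "J = I @ K" using pref_inf_prefix[OF \<omega>(2) J(2)] by blast
  then show ?thesis using that J by blast
qed

definition cylinder :: "nat list \<Rightarrow> (nat \<Rightarrow> nat) set" where
  "cylinder J = {\<omega>. \<forall>i<length J. \<omega> i = J ! i}"

lemma open_cylinder: "open (cylinder J)"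
proof -
  have "cylinder J = {\<omega>. \<forall>i\<in>{..<length J}. \<omega> (id i) \<in> {J ! i}}"
    by (auto simp: cylinder_def)
  also have "open \<dots>"
    by (rule product_topology_basis') (simp_all add: open_discrete)
  finally show ?thesis .
qed

lemma pref_inf_iff_cylinder: "pref_inf J \<omega> \<longleftrightarrow> \<omega> \<in> cylinder J"
  unfolding pref_inf_def restr_def cylinder_def
proof safe
  fix i assume "J = map \<omega> [0..<length J]" "i < length J"
  then show "\<omega> i = J ! i"
    by (metis add_0 diff_zero nth_map_upt)
next
  assume "\<forall>i<length J. \<omega> i = J ! i"
  then show "J = map \<omega> [0..<length J]"
    by (simp add: nth_equalityI)
qed

lemma compact_SigmaN: "compact (SigmaN N)"
proof -
  have "SigmaN N = PiE UNIV (\<lambda>_. {..<N})"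
    by (auto simp: SigmaN_def PiE_def Pi_def)
  moreover have "compactin (product_topology (\<lambda>_::nat. euclidean) UNIV) (PiE UNIV (\<lambda>_. {..<N::nat}))"
    by (simp add: compactin_PiE finite_imp_compact)
  ultimately show ?thesis
    unfolding euclidean_product_topology by simp
qed

text \<open>The cylinders of a cut form an open cover of the compact set T by pairwise
  disjoint sets, so the cut is finite.\<close>
lemma finite_cut:
  assumes "T \<subseteq> SigmaN N" "closed T" and cut: "\<I> \<in> cuts T I n"
  shows "finite \<I>"
proof -
  have "SigmaN N \<inter> T = T"
    using assms(1) by blast
  then have "compact T"
    using compact_Int_closed[OF compact_SigmaN[of N] assms(2)] by simp
  moreover have "T \<subseteq> (\<Union>J\<in>\<I>. cylinder J)"
  proof
    fix \<omega> assume "\<omega> \<in> T"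
    then obtain J where "J \<in> \<I>" "pref_inf J \<omega>"
      using cut unfolding cuts_def by blast
    then show "\<omega> \<in> (\<Union>J\<in>\<I>. cylinder J)"
      by (auto simp: pref_inf_iff_cylinder)
  qed
  ultimately obtain \<C> where \<C>: "\<C> \<subseteq> \<I>" "finite \<C>" "T \<subseteq> (\<Union>J\<in>\<C>. cylinder J)"
    by (rule compactE_image[OF _ open_cylinder])
  have "\<I> \<subseteq> \<C>"
  proof
    fix J assume J: "J \<in> \<I>"
    obtain \<omega> where \<omega>: "\<omega> \<in> T" "pref_inf J \<omega>"
      using Tstar_imp_pref_inf[OF cut_subset_Tstar[OF cut J]] by blast
    then obtain J' where J': "J' \<in> \<C>" "pref_inf J' \<omega>"
      using \<C>(3) by (auto simp: pref_inf_iff_cylinder)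
    then have "J' = J"
      using cut_unique[OF cut \<omega>(1) _ J _ \<omega>(2)] \<C>(1) by blast
    then show "J \<in> \<C>"
      using J' by simp
  qed
  then show ?thesis
    using \<C>(2) by (rule finite_subset)
qed

lemma cut_refinement_bij:
  assumes cut: "\<I> \<in> cuts T I n" and M: "\<And>K. I @ K \<in> \<I> \<Longrightarrow> length K \<le> M"
  shows "bij_betw (\<lambda>(K, L). K @ L)
           (SIGMA K:{K. I @ K \<in> \<I>}. extensions T (I @ K) (M - length K)) (extensions T I M)"
    (is "bij_betw ?app ?S _")
proof (rule bij_betw_imageI)
  show "inj_on ?app ?S"
  proof (rule inj_onI, clarsimp)
    fix K L K' L'
    assume KK': "I @ K \<in> \<I>" "I @ K' \<in> \<I>" and eq: "K @ L = K' @ L'"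
    then obtain Y where "K = K' @ Y \<and> Y @ L = L' \<or> K @ Y = K' \<and> L = Y @ L'"
      using append_eq_append_conv2 by metis
    then show "K = K' \<and> L = L'"
      using cut_antichain[OF cut, of "I @ K"] cut_antichain[OF cut, of "I @ K'"] KK' by auto
  qed
  show "?app ` ?S = extensions T I M"
  proof
    show "?app ` ?S \<subseteq> extensions T I M"
      using M by (auto simp: extensions_def)
    show "extensions T I M \<subseteq> ?app ` ?S"
    proof
      fix P assume P: "P \<in> extensions T I M"
      then obtain \<omega> where \<omega>: "\<omega> \<in> T" "pref_inf (I @ P) \<omega>"
        using Tstar_imp_pref_inf by (auto simp: extensions_def)
      obtain K where K: "I @ K \<in> \<I>" "pref_inf (I @ K) \<omega>"
        using cut_element_below[OF cut \<omega>(1) pref_inf_appendD[OF \<omega>(2)]] by blast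
      have "length (I @ K) \<le> length (I @ P)"
        using M[OF K(1)] P by (simp add: extensions_def)
      then obtain L where "P = K @ L"
        using pref_inf_prefix[OF K(2) \<omega>(2)] by auto
      with K(1) P have "(K, L) \<in> ?S" "P = ?app (K, L)"
        by (auto simp: extensions_def)
      then show "P \<in> ?app ` ?S" by blast
    qed
  qed
qed

lemma sum_cut_refinement:
  assumes T: "T \<subseteq> SigmaN N" and cut: "\<I> \<in> cuts T I n" and fin: "finite {K. I @ K \<in> \<I>}"
    and M: "\<And>K. I @ K \<in> \<I> \<Longrightarrow> length K \<le> M"
  shows "(\<Sum>K | I @ K \<in> \<I>. \<Sum>L\<in>extensions T (I @ K) (M - length K). g (I @ K @ L))
    = (\<Sum>P\<in>extensions T I M. g (I @ P))"
proof -
  have "(\<Sum>K | I @ K \<in> \<I>. \<Sum>L\<in>extensions T (I @ K) (M - length K). g (I @ K @ L))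
      = (\<Sum>(K, L)\<in>(SIGMA K:{K. I @ K \<in> \<I>}. extensions T (I @ K) (M - length K)). g (I @ K @ L))"
    by (rule sum.Sigma) (simp_all add: fin finite_extensions[OF T])
  also have "\<dots> = (\<Sum>P\<in>extensions T I M. g (I @ P))"
    using sum.reindex_bij_betw[OF cut_refinement_bij[OF cut M], of "\<lambda>P. g (I @ P)"]
    by (simp add: case_prod_unfold)
  finally show ?thesis .
qed

lemma level_cut:
  assumes "I \<in> Tstar T" "length I \<le> m"
  shows "Tlev T m \<in> cuts T I 0"
  unfolding cuts_def
proof (intro CollectI conjI ballI)
  show "Tlev T m \<subseteq> (\<Union>k\<in>{0..}. Tlev T k)"
    by blast
  show "\<exists>!J. J \<in> Tlev T m \<and> pref_inf J \<omega>" if "\<omega> \<in> T" for \<omega>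
  proof (rule ex1I[of _ "restr \<omega> m"])
    show "restr \<omega> m \<in> Tlev T m \<and> pref_inf (restr \<omega> m) \<omega>"
      using that by (simp add: Tlev_def restr_in_Tstar pref_inf_def)
  qed (auto simp: Tlev_def pref_inf_def)
  obtain \<omega> where \<omega>: "\<omega> \<in> T" "pref_inf I \<omega>"
    using Tstar_imp_pref_inf[OF assms(1)] by blast
  have "pref_inf (restr \<omega> m) \<omega>"
    by (simp add: pref_inf_def)
  then have "pref I (restr \<omega> m)"
    using pref_inf_prefix[OF \<omega>(2)] assms(2) by (simp add: pref_def)
  moreover have "restr \<omega> m \<in> Tlev T m"
    using \<omega>(1) by (simp add: Tlev_def restr_in_Tstar)
  ultimately show "\<exists>J\<in>Tlev T m. pref I J"
    by blast
qed

lemma below_level_eq_extensions: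
  "length I \<le> m \<Longrightarrow> {J. I @ J \<in> Tlev T m} = extensions T I (m - length I)"
  by (auto simp: Tlev_def extensions_def)

lemma sum_extensions_add:
  assumes T: "T \<subseteq> SigmaN N"
  shows "(\<Sum>P\<in>extensions T I (n + m). g (I @ P))
    = (\<Sum>J\<in>extensions T I n. \<Sum>L\<in>extensions T (I @ J) m. g (I @ J @ L))"
proof (cases "I \<in> Tstar T")
  case True
  let ?\<I> = "Tlev T (length I + n)"
  have sets: "{J. I @ J \<in> ?\<I>} = extensions T I n"
    using below_level_eq_extensions[of I "length I + n"] by simp
  have fin: "finite {J. I @ J \<in> ?\<I>}"
    unfolding sets by (rule finite_extensions[OF T])
  have M: "length J \<le> n + m" if "I @ J \<in> ?\<I>" for J
    using that by (simp add: Tlev_def)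
  have "(\<Sum>P\<in>extensions T I (n + m). g (I @ P))
      = (\<Sum>J | I @ J \<in> ?\<I>. \<Sum>L\<in>extensions T (I @ J) (n + m - length J). g (I @ J @ L))"
    by (rule sum_cut_refinement[OF T level_cut[OF True le_add1] fin M, symmetric])
  also have "\<dots> = (\<Sum>J\<in>extensions T I n. \<Sum>L\<in>extensions T (I @ J) m. g (I @ J @ L))"
    unfolding sets by (intro sum.cong refl) (simp add: extensions_def)
  finally show ?thesis .
next
  case False
  then show ?thesis
    by (simp add: extensions_not_Tstar)
qed

lemma sum_cut_eq_of_T3:
  assumes T: "T \<subseteq> SigmaN N" "closed T" and t3: "T3 T r s"
    and I: "I \<in> Tstar T" and cut: "\<I> \<in> cuts T I n"
  shows "(\<Sum>J | I @ J \<in> \<I>. r (I @ J) powr s) = r I powr s"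
proof -
  let ?A = "{K. I @ K \<in> \<I>}"
  have fin: "finite ?A"
    using finite_vimageI[OF finite_cut[OF T cut], of "(@) I"] by (simp add: vimage_def inj_def)
  define M where "M = Max (length ` ?A)"
  have M: "length K \<le> M" if "I @ K \<in> \<I>" for K
    using fin that by (auto simp: M_def)
  have "r (I @ K) powr s = (\<Sum>L\<in>extensions T (I @ K) (M - length K). r (I @ K @ L) powr s)"
    if "I @ K \<in> \<I>" for K
  proof -
    have "(\<Sum>L | length L = M - length K \<and> (I @ K) @ L \<in> Tstar T. r ((I @ K) @ L) powr s)
        = r (I @ K) powr s"
      using t3 cut_subset_Tstar[OF cut that] unfolding T3_def by blast
    then show ?thesis
      by (simp add: extensions_def)
  qed
  then have "(\<Sum>K\<in>?A. r (I @ K) powr s)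
      = (\<Sum>K\<in>?A. \<Sum>L\<in>extensions T (I @ K) (M - length K). r (I @ K @ L) powr s)"
    by (intro sum.cong) auto
  also have "\<dots> = (\<Sum>P\<in>extensions T I M. r (I @ P) powr s)"
    by (rule sum_cut_refinement[OF T(1) cut fin M])
  also have "\<dots> = r I powr s"
    using t3 I by (simp add: T3_def extensions_def)
  finally show ?thesis .
qed

lemma T3'_of_s_tree:
  assumes "T \<subseteq> SigmaN N" "closed T" "s_tree N T x r s"
  shows "T3' T r s 1"
proof -
  have "T3 T r s"
    using assms(3) unfolding s_tree_def by blast
  then show ?thesis
    using sum_cut_eq_of_T3[OF assms(1,2)] by (simp add: T3'_def)
qed

section \<open>Level sums and their additive limit\<close>

text \<open>For m \<le> length I truncated subtraction makes this r I powr s (if I \<in> Tstar T).\<close>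
definition level_sum :: "(nat \<Rightarrow> nat) set \<Rightarrow> (nat list \<Rightarrow> real) \<Rightarrow> real \<Rightarrow> nat \<Rightarrow> nat list \<Rightarrow> real" where
  "level_sum T r s m I = (\<Sum>K\<in>extensions T I (m - length I). r (I @ K) powr s)"

lemma level_sum_bounds:
  assumes "T3' T r s E" "I \<in> Tstar T"
  shows "1 / E * r I powr s \<le> level_sum T r s m I \<and> level_sum T r s m I \<le> E * r I powr s"
proof -
  let ?m = "max m (length I)"
  have "level_sum T r s m I = (\<Sum>J | I @ J \<in> Tlev T ?m. r (I @ J) powr s)"
    by (simp add: level_sum_def below_level_eq_extensions max_def)
  then show ?thesis
    using assms level_cut[OF assms(2), of ?m] unfolding T3'_def by simp
qed

lemma level_sum_not_Tstar: "I \<notin> Tstar T \<Longrightarrow> level_sum T r s m I = 0"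
  by (simp add: level_sum_def extensions_not_Tstar)

lemma level_sum_additive:
  assumes T: "T \<subseteq> SigmaN N" and m: "length I + n \<le> m"
  shows "level_sum T r s m I = (\<Sum>J\<in>extensions T I n. level_sum T r s m (I @ J))"
proof -
  have split: "m - length I = n + (m - length I - n)"
    using m by simp
  have "level_sum T r s m I = (\<Sum>P\<in>extensions T I (n + (m - length I - n)). r (I @ P) powr s)"
    unfolding level_sum_def by (simp only: split[symmetric])
  also have "\<dots>
      = (\<Sum>J\<in>extensions T I n. \<Sum>L\<in>extensions T (I @ J) (m - length I - n). r (I @ J @ L) powr s)"
    by (rule sum_extensions_add[OF T])
  also have "\<dots> = (\<Sum>J\<in>extensions T I n. level_sum T r s m (I @ J))"
  proof (rule sum.cong[OF refl])
    fix J assume "J \<in> extensions T I n"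
    then have "m - length (I @ J) = m - length I - n"
      by (simp add: extensions_def)
    then show "(\<Sum>L\<in>extensions T (I @ J) (m - length I - n). r (I @ J @ L) powr s)
        = level_sum T r s m (I @ J)"
      by (simp add: level_sum_def)
  qed
  finally show ?thesis .
qed

lemma pointwise_convergent_subseq:
  fixes f :: "nat \<Rightarrow> 'i::countable \<Rightarrow> real"
  assumes "\<And>m i. \<bar>f m i\<bar> \<le> b i"
  obtains \<phi> \<nu> where "strict_mono \<phi>" "\<And>i. (\<lambda>k. f (\<phi> k) i) \<longlonglongrightarrow> \<nu> i"
proof -
  let ?S = "PiE UNIV (\<lambda>i. {- b i .. b i})"
  have "compactin (product_topology (\<lambda>_. euclidean) UNIV) ?S"
    by (simp add: compactin_PiE)
  then have "compact ?S"
    unfolding euclidean_product_topology by simp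
  then have "seq_compact ?S"
    by (rule compact_imp_seq_compact)
  moreover have "\<forall>m. f m \<in> ?S"
    using assms by (simp add: PiE_iff abs_le_iff) (meson minus_le_iff)
  ultimately obtain \<nu> \<phi> where \<phi>: "strict_mono \<phi>" and lim: "(f \<circ> \<phi>) \<longlonglongrightarrow> \<nu>"
    by (rule seq_compactE)
  have "(\<lambda>k. f (\<phi> k) i) \<longlonglongrightarrow> \<nu> i" for i
    using continuous_on_tendsto_compose[OF continuous_on_product_coordinates lim UNIV_I]
    by (simp add: comp_def)
  with \<phi> show ?thesis
    by (rule that)
qed

lemma additive_limit_of_T3':
  assumes T: "T \<subseteq> SigmaN N" and t3': "T3' T r s E" and E: "0 < E"
  obtains \<nu> where "\<And>I. I \<in> Tstar T \<Longrightarrow> 1 / E * r I powr s \<le> \<nu> I \<and> \<nu> I \<le> E * r I powr s"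
    and "\<And>I n. \<nu> I = (\<Sum>J\<in>extensions T I n. \<nu> (I @ J))"
proof -
  have bound: "\<bar>level_sum T r s m I\<bar> \<le> E * r I powr s" for m I
  proof (cases "I \<in> Tstar T")
    case True
    have "0 \<le> level_sum T r s m I"
      by (simp add: level_sum_def sum_nonneg)
    then show ?thesis
      using level_sum_bounds[OF t3' True] by simp
  next
    case False
    then show ?thesis
      using E by (simp add: level_sum_not_Tstar)
  qed
  obtain \<phi> \<nu> where \<phi>: "strict_mono \<phi>"
    and lim: "\<And>I. (\<lambda>k. level_sum T r s (\<phi> k) I) \<longlonglongrightarrow> \<nu> I"
    using pointwise_convergent_subseq[of "\<lambda>m. level_sum T r s m" "\<lambda>I. E * r I powr s"] bound
    by blast
  show ?thesis
  proof
    fix I assume I: "I \<in> Tstar T"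
    have b: "1 / E * r I powr s \<le> level_sum T r s m I \<and> level_sum T r s m I \<le> E * r I powr s" for m
      by (rule level_sum_bounds[OF t3' I])
    have "1 / E * r I powr s \<le> \<nu> I"
      by (rule tendsto_lowerbound[OF lim]) (use b in simp_all)
    moreover have "\<nu> I \<le> E * r I powr s"
      by (rule tendsto_upperbound[OF lim]) (use b in simp_all)
    ultimately show "1 / E * r I powr s \<le> \<nu> I \<and> \<nu> I \<le> E * r I powr s" ..
  next
    fix I n
    have "\<forall>\<^sub>F k in sequentially.
        (\<Sum>J\<in>extensions T I n. level_sum T r s (\<phi> k) (I @ J)) = level_sum T r s (\<phi> k) I"
    proof (rule eventually_sequentiallyI[of "length I + n"])
      fix k assume "length I + n \<le> k"
      then show "(\<Sum>J\<in>extensions T I n. level_sum T r s (\<phi> k) (I @ J)) = level_sum T r s (\<phi> k) I"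
        using seq_suble[OF \<phi>, of k] level_sum_additive[OF T, of I n "\<phi> k"] by simp
    qed
    with tendsto_sum[OF lim]
    have "(\<lambda>k. level_sum T r s (\<phi> k) I) \<longlonglongrightarrow> (\<Sum>J\<in>extensions T I n. \<nu> (I @ J))"
      by (rule Lim_transform_eventually)
    then show "\<nu> I = (\<Sum>J\<in>extensions T I n. \<nu> (I @ J))"
      using lim LIMSEQ_unique by blast
  qed
qed

section \<open>Comparable radii\<close>

lemma T1_comparable:
  assumes "T1 T x r C" "0 \<le> C" "0 < a" "\<forall>I\<in>Tstar T. r' I \<le> a * r I"
  shows "T1 T x r' (C / a)"
  unfolding T1_def
proof (intro ballI impI)
  fix I J assume IJ: "I \<in> Tstar T" "J \<in> Tstar T" "incomparable I J"
  have "C / a * (r' I + r' J) \<le> C / a * (a * r I + a * r J)"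
    using assms(2-4) IJ by (intro mult_left_mono add_mono) auto
  also have "\<dots> = C * (r I + r J)"
    using assms(3) by (simp add: field_simps)
  also have "\<dots> \<le> dist (x I) (x J)"
    using assms(1) IJ unfolding T1_def by blast
  finally show "C / a * (r' I + r' J) \<le> dist (x I) (x J)" .
qed

lemma T2_comparable:
  assumes "T2 T x r D" "0 \<le> D" "\<forall>I\<in>Tstar T. r I \<le> a * r' I"
  shows "T2 T x r' (D * a)"
  unfolding T2_def
proof (intro ballI allI impI)
  fix I J K assume I: "I \<in> Tstar T" and JK: "I @ J \<in> Tstar T" "I @ K \<in> Tstar T"
  have "dist (x (I @ J)) (x (I @ K)) \<le> D * r I"
    using assms(1) I JK unfolding T2_def by blast
  also have "\<dots> \<le> D * (a * r' I)"
    using assms(2,3) I by (intro mult_left_mono) auto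
  finally show "dist (x (I @ J)) (x (I @ K)) \<le> D * a * r' I"
    by (simp add: mult.assoc)
qed

lemma T4_comparable:
  assumes "T4 T r" "0 < a" "\<forall>I\<in>Tstar T. r' I \<le> a * r I"
  shows "T4 T r'"
  unfolding T4_def
proof (intro allI impI)
  fix \<epsilon> :: real assume "0 < \<epsilon>"
  then have "0 < \<epsilon> / a"
    using assms(2) by simp
  then obtain k where k: "\<forall>I\<in>Tstar T. k \<le> length I \<longrightarrow> r I < \<epsilon> / a"
    using assms(1) unfolding T4_def by blast
  have "r' I < \<epsilon>" if "I \<in> Tstar T" "k \<le> length I" for I
  proof -
    have "a * r I < \<epsilon>"
      using k that assms(2) by (simp add: pos_less_divide_eq mult.commute)
    then show ?thesis
      using assms(3) that by fastforce
  qed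
  then show "\<exists>k. \<forall>I\<in>Tstar T. k \<le> length I \<longrightarrow> r' I < \<epsilon>"
    by blast
qed

lemma T5_comparable:
  assumes "T5 N T r \<rho>" "0 \<le> \<rho>" "0 < a"
    "\<forall>I\<in>Tstar T. r I \<le> a * r' I" "\<forall>I\<in>Tstar T. r' I \<le> a * r I"
  shows "T5 N T r' (\<rho> / (a * a))"
  unfolding T5_def
proof (intro allI impI)
  fix I j assume j: "j < N" "I @ [j] \<in> Tstar T"
  have I: "I \<in> Tstar T"
    using Tstar_appendD[OF j(2)] .
  have "\<rho> / (a * a) * r' I \<le> \<rho> / (a * a) * (a * r I)"
    using assms(2,3,5) I by (intro mult_left_mono) auto
  also have "\<dots> = \<rho> * r I / a"
    using assms(3) by (simp add: field_simps)
  also have "\<dots> \<le> r (I @ [j]) / a"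
    using assms(1,3) j unfolding T5_def by (intro divide_right_mono) auto
  also have "\<dots> \<le> r' (I @ [j])"
    using assms(3,4) j by (simp add: divide_le_eq mult.commute)
  finally show "\<rho> / (a * a) * r' I \<le> r' (I @ [j])" .
qed

lemma powr_root_bounds:
  fixes r v E s :: real
  assumes s: "0 < s" and E: "0 < E" and r: "0 < r"
    and v: "1 / E * r powr s \<le> v" "v \<le> E * r powr s"
  shows "E powr (-1/s) * r \<le> v powr (1/s) \<and> v powr (1/s) \<le> E powr (1/s) * r"
proof -
  have root: "(c * r powr s) powr (1/s) = c powr (1/s) * r" if "0 \<le> c" for c
    using that s r by (simp add: powr_mult powr_powr)
  have "E powr (-1/s) * r = (1 / E * r powr s) powr (1/s)"
    using root[of "1 / E"] E by (simp add: powr_divide powr_minus_divide)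
  also have "\<dots> \<le> v powr (1/s)"
    using v s E by (intro powr_mono2) auto
  finally have lower: "E powr (-1/s) * r \<le> v powr (1/s)" .
  have "0 \<le> 1 / E * r powr s"
    using E by simp
  then have "v powr (1/s) \<le> (E * r powr s) powr (1/s)"
    using v s by (intro powr_mono2) auto
  also have "\<dots> = E powr (1/s) * r"
    using root[of E] E by simp
  finally show ?thesis
    using lower by blast
qed

lemma T3_powr_root:
  assumes s: "0 < s" and nonneg: "\<forall>I\<in>Tstar T. 0 \<le> \<nu> I"
    and additive: "\<And>I n. \<nu> I = (\<Sum>J\<in>extensions T I n. \<nu> (I @ J))"
  shows "T3 T (\<lambda>I. \<nu> I powr (1/s)) s"
  unfolding T3_def
proof (intro ballI allI)
  have root: "(\<nu> I powr (1/s)) powr s = \<nu> I" if "I \<in> Tstar T" for I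
    using s nonneg that by (simp add: powr_powr)
  fix I n assume "I \<in> Tstar T"
  have "(\<Sum>J\<in>extensions T I n. (\<nu> (I @ J) powr (1/s)) powr s) = (\<Sum>J\<in>extensions T I n. \<nu> (I @ J))"
    using root by (intro sum.cong) (auto simp: extensions_def)
  also have "\<dots> = (\<nu> I powr (1/s)) powr s"
    using root[OF \<open>I \<in> Tstar T\<close>] additive[of I n] by simp
  finally show "(\<Sum>J | length J = n \<and> I @ J \<in> Tstar T. (\<nu> (I @ J) powr (1/s)) powr s)
      = (\<nu> I powr (1/s)) powr s"
    by (simp add: extensions_def)
qed

lemma s_tree_of_T3':
  fixes x :: "nat list \<Rightarrow> 'a::metric_space"
  assumes T: "T \<subseteq> SigmaN N" and s: "0 < s" and pos: "\<forall>I\<in>Tstar T. 0 < r I"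
    and "0 < \<rho>" "0 < C" "0 < D" and E: "0 < E"
    and "T1 T x r C" "T2 T x r D" and t3': "T3' T r s E" and "T4 T r" "T5 N T r \<rho>"
  shows "\<exists>r'. (\<forall>I\<in>Tstar T. E powr (-1/s) * r I \<le> r' I \<and> r' I \<le> E powr (1/s) * r I)
              \<and> s_tree N T x r' s"
proof -
  obtain \<nu> where \<nu>: "\<And>I. I \<in> Tstar T \<Longrightarrow> 1 / E * r I powr s \<le> \<nu> I \<and> \<nu> I \<le> E * r I powr s"
    and additive: "\<And>I n. \<nu> I = (\<Sum>J\<in>extensions T I n. \<nu> (I @ J))"
    using additive_limit_of_T3'[OF T t3' E] by blast
  define r' where "r' I = \<nu> I powr (1/s)" for I
  define a where "a = E powr (1/s)"
  have a: "0 < a" and a_inverse: "a * E powr (-1/s) = 1"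
    using E by (simp_all add: a_def flip: powr_add)
  have bounds: "E powr (-1/s) * r I \<le> r' I \<and> r' I \<le> a * r I" if "I \<in> Tstar T" for I
    unfolding r'_def a_def using powr_root_bounds[OF s E] pos \<nu> that by blast
  have upper: "\<forall>I\<in>Tstar T. r' I \<le> a * r I"
    using bounds by blast
  have lower: "\<forall>I\<in>Tstar T. r I \<le> a * r' I"
  proof
    fix I assume "I \<in> Tstar T"
    then have "a * (E powr (-1/s) * r I) \<le> a * r' I"
      using bounds a by (intro mult_left_mono) auto
    then show "r I \<le> a * r' I"
      using a_inverse by (simp add: mult.assoc[symmetric])
  qed
  have \<nu>_pos: "0 < \<nu> I" if "I \<in> Tstar T" for I
  proof -
    have "0 < r I powr s"
      using pos that by (simp add: less_imp_neq[symmetric])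
    then have "0 < 1 / E * r I powr s"
      using E by simp
    then show ?thesis
      using \<nu>[OF that] by linarith
  qed
  have "0 < r' I" if "I \<in> Tstar T" for I
    using \<nu>_pos[OF that] by (simp add: r'_def)
  moreover have "T3 T r' s"
    unfolding r'_def using \<nu>_pos by (intro T3_powr_root[OF s _ additive]) (simp add: less_imp_le)
  ultimately have "s_tree N T x r' s"
    unfolding s_tree_def
    using assms(4-6) a T1_comparable[OF assms(8) _ a upper] T2_comparable[OF assms(9) _ lower]
      T4_comparable[OF assms(11) a upper] T5_comparable[OF assms(12) _ a lower upper]
    by (intro conjI exI[of _ "\<rho> / (a * a)"] exI[of _ "C / a"] exI[of _ "D * a"]) auto
  then show ?thesis
    using bounds unfolding a_def by blast
qed

theorem mainTheorem6:
  fixes N :: nat and T :: "(nat \<Rightarrow> nat) set"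
    and x :: "nat list \<Rightarrow> 'a::metric_space" and r :: "nat list \<Rightarrow> real" and s :: real
  assumes "T \<subseteq> SigmaN N" and "T \<noteq> {}" and "closed T" and "0 < s"
    and "\<forall>I\<in>Tstar T. 0 < r I"
  shows "(s_tree N T x r s \<longrightarrow> T3' T r s 1)
    \<and> (\<forall>\<rho> C D E. 0 < \<rho> \<and> 0 < C \<and> 0 < D \<and> 0 < E \<and>
          T1 T x r C \<and> T2 T x r D \<and> T3' T r s E \<and> T4 T r \<and> T5 N T r \<rho> \<longrightarrow>
        (\<exists>r'. (\<forall>I\<in>Tstar T. E powr (-1/s) * r I \<le> r' I \<and> r' I \<le> E powr (1/s) * r I)
              \<and> s_tree N T x r' s))"
  using T3'_of_s_tree[OF assms(1,3)] s_tree_of_T3'[OF assms(1,4,5)] by blast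

end
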